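(* The map $(f,z_1,z_2,z_3,\omega_1,\omega_2)\mapsto(z_1,z_2,z_3,\omega_1,\omega_2)$ is a bijection from $\mathrm{Rat}_2^{\mathrm{tm}}$ onto the open subset of $(S^2)^5$ consisting of the $5$-tuples $(z_1,z_2,z_3,\omega_1,\omega_2)$ such that (a) $\omega_1\neq\omega_2$, and (b) for each $i\neq j$ the cross-ratio $$\frac{(z_i-\omega_1)(z_j-\omega_2)}{(z_j-\omega_1)(z_i-\omega_2)}\in\mathbf C\cup\{\infty\}$$ is well defined and different from $-1$. In other words, a totally marked quadratic rational map is uniquely determined by its fixed points and critical points, and exactly the $5$-tuples satisfying (a) and (b) occur.
   Context: $S^2=\hat{\mathbf C}$ is the Riemann sphere. $\mathrm{Rat}_2^{\mathrm{tm}}$ is the space of $6$-tuples $(f,z_1,z_2,z_3,\omega_1,\omega_2)$ where $f$ is a holomorphic degree-$2$ self-map of $S^2$, $z_1,z_2,z_3$ is an ordered list of the fixed points of $f$ with multiplicity (a double or triple fixed point listed twice or three times), and $\omega_1\neq\omega_2$ is an ordering of the two critical points of $f$. Cross-ratios involving $\infty$ are interpreted in the usual way by omitting the corresponding factors. *)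

theory Defs
  imports "HOL-Analysis.Analysis" "HOL-Computational_Algebra.Polynomial"
begin

datatype csphere = Fin complex | Inf

definition sph_open :: "csphere set \<Rightarrow> bool" where
  "sph_open U \<longleftrightarrow> open {z. Fin z \<in> U} \<and>
     (Inf \<in> U \<longrightarrow> (\<exists>R. \<forall>z. norm z > R \<longrightarrow> Fin z \<in> U))"

definition open5 ::
  "(csphere \<times> csphere \<times> csphere \<times> csphere \<times> csphere) set \<Rightarrow> bool" where
  "open5 S \<longleftrightarrow> (\<forall>(a,b,c,d,e)\<in>S. \<exists>U1 U2 U3 U4 U5.
      sph_open U1 \<and> sph_open U2 \<and> sph_open U3 \<and> sph_open U4 \<and> sph_open U5 \<and>
      a \<in> U1 \<and> b \<in> U2 \<and> c \<in> U3 \<and> d \<in> U4 \<and> e \<in> U5 \<and>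
      U1 \<times> U2 \<times> U3 \<times> U4 \<times> U5 \<subseteq> S)"

text \<open>Point of the sphere with homogeneous coordinates [a : b] (assuming (a,b) \<noteq> (0,0)).\<close>
definition hpt :: "complex \<Rightarrow> complex \<Rightarrow> csphere" where
  "hpt a b = (if b = 0 then Inf else Fin (a / b))"

text \<open>The map z \<mapsto> P(z)/Q(z) on the sphere, with P, Q of degree \<le> 2, viewed as the
  homogeneous map [x:y] \<mapsto> [y^2 P(x/y) : y^2 Q(x/y)].\<close>
definition ratmap2 :: "complex poly \<Rightarrow> complex poly \<Rightarrow> csphere \<Rightarrow> csphere" where
  "ratmap2 P Q w = (case w of
      Fin z \<Rightarrow> hpt (poly P z) (poly Q z)
    | Inf \<Rightarrow> hpt (coeff P 2) (coeff Q 2))"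

definition deg2_rep :: "complex poly \<Rightarrow> complex poly \<Rightarrow> bool" where
  "deg2_rep P Q \<longleftrightarrow> coprime P Q \<and> max (degree P) (degree Q) = 2"

definition Rat2 :: "(csphere \<Rightarrow> csphere) set" where
  "Rat2 = {f. \<exists>P Q. deg2_rep P Q \<and> f = ratmap2 P Q}"

text \<open>Multiplicity of w as a zero of the binary form of formal degree d whose
  dehomogenisation is p (the root at Inf has multiplicity d - degree p).\<close>
definition form_mult :: "nat \<Rightarrow> complex poly \<Rightarrow> csphere \<Rightarrow> nat" where
  "form_mult d p w = (case w of Fin z \<Rightarrow> order z p | Inf \<Rightarrow> d - degree p)"

text \<open>Fixed-point form x Q(x,y) - y P(x,y) (cubic), dehomogenised: t Q(t) - P(t).\<close>
definition fix_mult :: "complex poly \<Rightarrow> complex poly \<Rightarrow> csphere \<Rightarrow> nat" where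
  "fix_mult P Q w = form_mult 3 (pCons 0 Q - P) w"

text \<open>Critical points: zeros of the Wronskian form (formal degree 2),
  dehomogenised: P' Q - P Q'.\<close>
definition crit_mult :: "complex poly \<Rightarrow> complex poly \<Rightarrow> csphere \<Rightarrow> nat" where
  "crit_mult P Q w = form_mult 2 (pderiv P * Q - P * pderiv Q) w"

definition critical_points :: "complex poly \<Rightarrow> complex poly \<Rightarrow> csphere set" where
  "critical_points P Q = {w. crit_mult P Q w > 0}"

definition Rat2_tm ::
  "((csphere \<Rightarrow> csphere) \<times> csphere \<times> csphere \<times> csphere \<times> csphere \<times> csphere) set" where
  "Rat2_tm = {(f, z1, z2, z3, w1, w2). f \<in> Rat2 \<and>
      (\<exists>P Q. deg2_rep P Q \<and> f = ratmap2 P Q \<and>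
         (\<forall>w. count {#z1, z2, z3#} w = fix_mult P Q w) \<and>
         critical_points P Q = {w1, w2}) \<and> w1 \<noteq> w2}"

text \<open>The factor (a - b) in a cross-ratio; factors involving Inf (against a finite
  point) are omitted, i.e. replaced by 1; Inf - Inf = 0.\<close>
definition sdiff :: "csphere \<Rightarrow> csphere \<Rightarrow> complex" where
  "sdiff a b = (case (a, b) of
      (Fin x, Fin y) \<Rightarrow> x - y
    | (Inf, Inf) \<Rightarrow> 0
    | _ \<Rightarrow> 1)"

text \<open>The cross-ratio (z - w1)(z' - w2) / ((z' - w1)(z - w2)) as an element of C \<union> {Inf};
  None if it is not well defined (0/0).\<close>
definition cross_ratio ::
  "csphere \<Rightarrow> csphere \<Rightarrow> csphere \<Rightarrow> csphere \<Rightarrow> csphere option" where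
  "cross_ratio z z' w1 w2 =
     (let num = sdiff z w1 * sdiff z' w2; den = sdiff z' w1 * sdiff z w2 in
      if num = 0 \<and> den = 0 then None else Some (hpt num den))"

definition admissible ::
  "(csphere \<times> csphere \<times> csphere \<times> csphere \<times> csphere) set" where
  "admissible = {(z1, z2, z3, w1, w2). w1 \<noteq> w2 \<and>
      (let zs = [z1, z2, z3] in \<forall>i<3. \<forall>j<3. i \<noteq> j \<longrightarrow>
          (\<exists>c. cross_ratio (zs ! i) (zs ! j) w1 w2 = Some c \<and> c \<noteq> Fin (-1)))}"

end

theory Submission
  imports Defs "HOL-Computational_Algebra.Fundamental_Theorem_Algebra"
begin

text \<open>
  Write f = P/Q with P, Q of degree at most 2. Up to scalars, the fixed points of f are the roots
  of the cubic F = t Q - P and its critical points are the roots of the Wronskian W = P'Q - PQ'.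
  The Wronskian of two quadratics is apolar to both of them, so P and Q lie in the plane of
  quadratics apolar to W. If the critical points are distinct, W has nonzero discriminant and
  (P, Q) \<mapsto> t Q - P is a bijection from pairs of such quadratics onto cubics; hence the marking
  determines (P, Q) up to a common scalar, and Cramer's rule gives it explicitly. For this
  solution W(P, Q) = 2 N W, where N is the product over i < j of
  (z_i - w1)(z_j - w2) + (z_j - w1)(z_i - w2), while discr W(P, Q) = 4 Res(P, Q). So the solution
  is a reduced quadratic map with critical points w1, w2 iff N \<noteq> 0, which is the cross-ratio
  condition. Openness holds because the condition is the non-vanishing of a polynomial that is
  homogeneous in each of the five homogeneous coordinates.
\<close>

lemma degree_quadratic_le [simp]: "degree [:a, b, c:] \<le> 2"
  by (auto intro: order.trans[OF degree_pCons_le])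

lemma coeff_pCons_numeral [simp]: "coeff (pCons a p) (numeral n) = coeff p (pred_numeral n)"
  by (simp add: numeral_eq_Suc)

lemma quadratic_poly_eq: "degree p \<le> 2 \<Longrightarrow> p = [:coeff p 0, coeff p 1, coeff p 2:]"
  by (rule poly_eqI) (auto simp: coeff_pCons coeff_eq_0 numeral_2_eq_2 split: nat.split)

lemma cubic_poly_eq: "degree p \<le> 3 \<Longrightarrow> p = [:coeff p 0, coeff p 1, coeff p 2, coeff p 3:]"
  by (rule poly_eqI) (auto simp: coeff_pCons coeff_eq_0 numeral_2_eq_2 numeral_3_eq_3 split: nat.split)

lemma coprime_if_no_common_root:
  fixes p q :: "'a :: alg_closed_field poly"
  assumes "p \<noteq> 0" and "\<And>x. poly p x = 0 \<Longrightarrow> poly q x \<noteq> 0"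
  shows "coprime p q"
proof (rule coprimeI)
  fix g assume "g dvd p" "g dvd q"
  show "is_unit g"
  proof (rule ccontr)
    assume "\<not> is_unit g"
    with \<open>g dvd p\<close> \<open>p \<noteq> 0\<close> have "degree g > 0"
      by (metis dvd_0_left_iff gr0I is_unit_iff_degree)
    then obtain x where "poly g x = 0"
      using alg_closed_imp_poly_has_root by blast
    with \<open>g dvd p\<close> \<open>g dvd q\<close> assms(2) show False
      by (metis dvd_trans poly_eq_0_iff_dvd)
  qed
qed

lemma complex_poly_eq_smult_if_order_eq:
  fixes p q :: "complex poly"
  assumes "p \<noteq> 0" "q \<noteq> 0" and "\<And>x. order x p = order x q"
  shows "p = smult (lead_coeff p / lead_coeff q) q"
proof -
  have "{x. poly p x = 0} = {x. poly q x = 0}"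
    using assms by (auto simp flip: order_gt_0_iff)
  then have "(\<Prod>x | poly p x = 0. [:-x, 1:] ^ order x p) =
      (\<Prod>x | poly q x = 0. [:-x, 1:] ^ order x q)"
    using assms(3) by simp
  moreover have "smult (1 / lead_coeff q) q = (\<Prod>x | poly q x = 0. [:-x, 1:] ^ order x q)"
    using \<open>q \<noteq> 0\<close> by (subst (2) complex_poly_decompose[of q, symmetric]) simp
  ultimately have "p = smult (lead_coeff p) (smult (1 / lead_coeff q) q)"
    using complex_poly_decompose[of p] by simp
  then show ?thesis
    by simp
qed

section \<open>The Wronskian\<close>

abbreviation wronskian :: "'a::idom poly \<Rightarrow> 'a poly \<Rightarrow> 'a poly" where
  "wronskian p q \<equiv> pderiv p * q - p * pderiv q"

lemma wronskian_quadratic: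
  "wronskian [:p0, p1, p2:] [:q0, q1, q2:] =
     [:p1 * q0 - p0 * q1, 2 * (p2 * q0 - p0 * q2), p2 * q1 - p1 * q2:]"
  by (simp add: pderiv_pCons algebra_simps)

lemma wronskian_smult: "wronskian (smult k p) (smult k q) = smult (k^2) (wronskian p q)"
  by (simp add: pderiv_smult power2_eq_square smult_diff_right mult_smult_left mult_smult_right)

lemma degree_wronskian_le:
  "degree p \<le> 2 \<Longrightarrow> degree q \<le> 2 \<Longrightarrow> degree (wronskian p q) \<le> 2"
  by (subst (1 2 3 4) quadratic_poly_eq) (simp_all only: wronskian_quadratic degree_quadratic_le)

lemma degree_eq_0_if_coprime_wronskian_eq_0:
  fixes p q :: "complex poly"
  assumes "coprime p q" and "wronskian p q = 0"
  shows "degree p = 0"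
proof (rule ccontr)
  assume "degree p \<noteq> 0"
  then obtain a where root: "poly p a = 0"
    using fundamental_theorem_of_algebra[of p] by (auto simp: constant_degree)
  have "p \<noteq> 0" "pderiv p \<noteq> 0"
    using \<open>degree p \<noteq> 0\<close> by (auto simp: pderiv_eq_0_iff)
  have "poly q a \<noteq> 0"
    using coprime_poly_0[OF assms(1)] root by blast
  then have "q \<noteq> 0" "order a q = 0"
    by (auto intro: order_0I)
  have eq: "pderiv p * q = p * pderiv q"
    using assms(2) by simp
  with \<open>pderiv p \<noteq> 0\<close> \<open>q \<noteq> 0\<close> have "pderiv q \<noteq> 0"
    by auto
  from eq have "order a (pderiv p) + order a q = order a p + order a (pderiv q)"
    using \<open>p \<noteq> 0\<close> \<open>pderiv p \<noteq> 0\<close> \<open>q \<noteq> 0\<close> \<open>pderiv q \<noteq> 0\<close>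
    by (metis order_mult mult_eq_0_iff)
  moreover have "order a p = Suc (order a (pderiv p))"
    using order_pderiv[OF \<open>p \<noteq> 0\<close> root] .
  ultimately show False
    using \<open>order a q = 0\<close> by simp
qed

lemma deg2_rep_wronskian_nonzero:
  assumes "deg2_rep P Q"
  shows "wronskian P Q \<noteq> 0"
proof
  assume "wronskian P Q = 0"
  moreover have "wronskian Q P = - wronskian P Q"
    by (simp add: algebra_simps)
  ultimately have "degree P = 0" "degree Q = 0"
    using assms degree_eq_0_if_coprime_wronskian_eq_0[of P Q]
      degree_eq_0_if_coprime_wronskian_eq_0[of Q P]
    by (auto simp: deg2_rep_def coprime_commute)
  with assms show False
    by (simp add: deg2_rep_def)
qed

definition discr :: "complex poly \<Rightarrow> complex" where
  "discr t = coeff t 1 ^ 2 - 4 * coeff t 0 * coeff t 2"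

lemma discr_smult [simp]: "discr (smult c t) = c^2 * discr t"
  by (simp add: discr_def power2_eq_square algebra_simps)

text \<open>For quadratics, discr (wronskian p q) is four times the resultant of p and q.\<close>
lemma deg2_rep_if_discr_wronskian_nonzero:
  assumes "degree p \<le> 2" "degree q \<le> 2" and "discr (wronskian p q) \<noteq> 0"
  shows "deg2_rep p q"
proof -
  obtain p0 p1 p2 q0 q1 q2 where p: "p = [:p0, p1, p2:]" and q: "q = [:q0, q1, q2:]"
    using quadratic_poly_eq assms(1,2) by metis
  have "discr (wronskian p q) = 4 * ((p2*q0 - p0*q2)^2 - (p2*q1 - p1*q2) * (p1*q0 - p0*q1))"
    unfolding p q wronskian_quadratic by (simp add: discr_def power2_eq_square algebra_simps)
  with assms(3) have res: "(p2*q0 - p0*q2)^2 - (p2*q1 - p1*q2) * (p1*q0 - p0*q1) \<noteq> 0"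
    by simp
  have "p \<noteq> 0"
    using res by (auto simp: p)
  moreover have "poly q x \<noteq> 0" if "poly p x = 0" for x
  proof
    assume "poly q x = 0"
    with that have "(p2*q0 - p0*q2)^2 - (p2*q1 - p1*q2) * (p1*q0 - p0*q1) = 0"
      by (simp add: p q) algebra
    with res show False
      by simp
  qed
  ultimately have "coprime p q"
    by (rule coprime_if_no_common_root)
  moreover have "p2 \<noteq> 0 \<or> q2 \<noteq> 0"
    using res by auto
  then have "max (degree p) (degree q) = 2"
    using assms(1,2) by (auto simp: p q)
  ultimately show ?thesis
    by (simp add: deg2_rep_def)
qed

section \<open>Apolarity\<close>

definition apolar :: "complex poly \<Rightarrow> complex poly \<Rightarrow> bool" where
  "apolar t p \<longleftrightarrow>
    2 * coeff p 0 * coeff t 2 - coeff p 1 * coeff t 1 + 2 * coeff p 2 * coeff t 0 = 0"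

lemma apolar_smult_iff [simp]:
  assumes "c \<noteq> 0"
  shows "apolar (smult c t) p \<longleftrightarrow> apolar t p"
proof -
  have "2 * coeff p 0 * coeff (smult c t) 2 - coeff p 1 * coeff (smult c t) 1
      + 2 * coeff p 2 * coeff (smult c t) 0
      = c * (2 * coeff p 0 * coeff t 2 - coeff p 1 * coeff t 1 + 2 * coeff p 2 * coeff t 0)"
    by (simp add: algebra_simps)
  with assms show ?thesis
    by (simp add: apolar_def)
qed

lemma apolar_lincomb:
  "apolar t p \<Longrightarrow> apolar t q \<Longrightarrow> apolar t (smult a p - smult b q)"
  unfolding apolar_def by simp algebra

lemma apolar_wronskian:
  assumes "degree p \<le> 2" "degree q \<le> 2"
  shows "apolar (wronskian p q) p \<and> apolar (wronskian p q) q"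
proof -
  obtain p0 p1 p2 q0 q1 q2 where "p = [:p0, p1, p2:]" and "q = [:q0, q1, q2:]"
    using quadratic_poly_eq assms by metis
  then show ?thesis
    by (simp only: wronskian_quadratic) (simp add: apolar_def algebra_simps)
qed

lemma apolar_fixed_form_eq_0:
  assumes "discr t \<noteq> 0" "apolar t p" "apolar t q" "degree p \<le> 2" "degree q \<le> 2"
    and "pCons 0 q = p"
  shows "p = 0 \<and> q = 0"
proof -
  obtain q0 q1 q2 where q: "q = [:q0, q1, q2:]"
    using quadratic_poly_eq assms(5) by metis
  have "q2 = coeff p 3"
    using q assms(6) by auto
  with assms(4) have "q2 = 0"
    by (simp add: coeff_eq_0)
  with q assms(2,3,6) have
    "2 * q1 * coeff t 0 - q0 * coeff t 1 = 0" "2 * q0 * coeff t 2 - q1 * coeff t 1 = 0"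
    by (auto simp: apolar_def)
  then have "discr t * q0 = 0" "discr t * q1 = 0"
    unfolding discr_def by algebra+
  with q assms(1,6) \<open>q2 = 0\<close> show ?thesis
    by auto
qed

lemma apolar_pair_proportional:
  assumes "discr t \<noteq> 0" "c \<noteq> 0"
    and "apolar t p" "apolar t q" "apolar t p'" "apolar t q'"
    and "degree p \<le> 2" "degree q \<le> 2" "degree p' \<le> 2" "degree q' \<le> 2"
    and "pCons 0 q - p = smult c f" "pCons 0 q' - p' = smult c' f"
  shows "p' = smult (c' / c) p \<and> q' = smult (c' / c) q"
proof -
  let ?p = "smult c p' - smult c' p" and ?q = "smult c q' - smult c' q"
  have "pCons 0 ?q = smult c (pCons 0 q') - smult c' (pCons 0 q)"
    by (simp add: smult_pCons diff_pCons)
  also have "\<dots> = smult c (p' + smult c' f) - smult c' (p + smult c f)"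
    using assms(11,12) by (simp add: diff_eq_eq add.commute)
  also have "\<dots> = ?p"
    by (simp add: smult_add_right mult.commute)
  finally have "pCons 0 ?q = ?p" .
  then have "?p = 0 \<and> ?q = 0"
    using assms(1,3-10)
    by (intro apolar_fixed_form_eq_0 apolar_lincomb)
      (auto intro!: degree_diff_le order.trans[OF degree_smult_le])
  then have "smult (1 / c) (smult c p') = smult (1 / c) (smult c' p)"
    "smult (1 / c) (smult c q') = smult (1 / c) (smult c' q)"
    by simp_all
  with \<open>c \<noteq> 0\<close> show ?thesis
    by simp
qed

text \<open>Cramer's rule, with the determinant discr t cleared, for the linear system apolar t p,
  apolar t q, pCons 0 q - p = f in the coefficients of p and q.\<close>
definition solve_num :: "complex poly \<Rightarrow> complex poly \<Rightarrow> complex poly" where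
  "solve_num f t =
    (let r1 = 2 * coeff f 0 * coeff t 2;
         r2 = coeff t 1 * coeff f 2 - 2 * coeff t 2 * coeff f 1 - 2 * coeff t 0 * coeff f 3
     in [:- discr t * coeff f 0, - coeff t 1 * r1 - 2 * coeff t 0 * r2,
          - coeff t 1 * r2 - 2 * coeff t 2 * r1:])"

definition solve_den :: "complex poly \<Rightarrow> complex poly \<Rightarrow> complex poly" where
  "solve_den f t =
    [:coeff (solve_num f t) 1 + discr t * coeff f 1, coeff (solve_num f t) 2 + discr t * coeff f 2,
      discr t * coeff f 3:]"

lemma degree_solve_num [simp]: "degree (solve_num f t) \<le> 2"
  by (simp add: solve_num_def Let_def)

lemma degree_solve_den [simp]: "degree (solve_den f t) \<le> 2"
  by (simp add: solve_den_def)

lemma fixed_form_solve: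
  assumes "degree f \<le> 3"
  shows "pCons 0 (solve_den f t) - solve_num f t = smult (discr t) f"
  by (subst (3) cubic_poly_eq[OF assms]) (simp add: solve_den_def solve_num_def Let_def)

lemma apolar_solve: "apolar t (solve_num f t)" "apolar t (solve_den f t)"
  by (simp_all add: apolar_def solve_den_def solve_num_def discr_def Let_def) algebra+

section \<open>Binary forms with prescribed zeros\<close>

type_synonym hvec = "complex \<times> complex"

fun hcoord :: "csphere \<Rightarrow> hvec" where
  "hcoord (Fin z) = (z, 1)"
| "hcoord Inf = (1, 0)"

definition det2 :: "hvec \<Rightarrow> hvec \<Rightarrow> complex" where
  "det2 u v = fst u * snd v - snd u * fst v"

lemma det2_hcoord_eq_0_iff: "det2 (hcoord u) (hcoord v) = 0 \<longleftrightarrow> u = v"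
  by (cases u; cases v) (simp_all add: det2_def)

definition hscale :: "complex \<Rightarrow> hvec \<Rightarrow> hvec" where
  "hscale l u = (l * fst u, l * snd u)"

lemma det2_hscale [simp]: "det2 (hscale l u) (hscale m v) = l * m * det2 u v"
  by (simp add: det2_def hscale_def algebra_simps)

text \<open>The dehomogenisation (at y = 1) of the linear form det2 (x, y) u, which vanishes exactly
  at the point u of the projective line.\<close>
definition lform :: "hvec \<Rightarrow> complex poly" where
  "lform u = [:- fst u, snd u:]"

definition root_form :: "csphere multiset \<Rightarrow> complex poly" where
  "root_form M = (\<Prod>u\<in>#M. lform (hcoord u))"

lemma lform_hcoord_nonzero [simp]: "lform (hcoord u) \<noteq> 0"
  by (cases u) (simp_all add: lform_def)

lemma order_lform_hcoord: "order a (lform (hcoord u)) = (if u = Fin a then 1 else 0)"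
proof (cases u)
  case (Fin z)
  then show ?thesis
    using order_power_n_n[of a 1] by (auto simp: lform_def intro: order_0I)
qed (auto simp: lform_def intro: order_0I)

lemma degree_lform_hcoord: "degree (lform (hcoord u)) = (if u = Inf then 0 else 1)"
  by (cases u) (simp_all add: lform_def)

lemma form_mult_lform_mult:
  assumes "p \<noteq> 0" "degree p \<le> d"
  shows "form_mult (Suc d) (lform (hcoord u) * p) w = (if u = w then 1 else 0) + form_mult d p w"
proof (cases w)
  case (Fin a)
  with assms(1) show ?thesis
    by (auto simp: form_mult_def order_mult order_lform_hcoord)
next
  case Inf
  with assms show ?thesis
    by (auto simp: form_mult_def degree_mult_eq degree_lform_hcoord)
qed

lemma root_form_nonzero: "root_form M \<noteq> 0"
  by (auto simp: root_form_def)

lemma degree_root_form_le: "degree (root_form M) \<le> size M"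
proof (induction M)
  case (add u M)
  then show ?case
    using root_form_nonzero[of M] by (simp add: root_form_def degree_mult_eq degree_lform_hcoord)
qed (simp add: root_form_def)

lemma form_mult_root_form: "form_mult (size M) (root_form M) w = count M w"
proof (induction M)
  case empty
  show ?case
    by (simp add: root_form_def form_mult_def split: csphere.split)
next
  case (add u M)
  have "root_form (add_mset u M) = lform (hcoord u) * root_form M"
    by (simp add: root_form_def)
  then show ?case
    using add form_mult_lform_mult[OF root_form_nonzero degree_root_form_le] by simp
qed

lemma form_mult_smult: "c \<noteq> 0 \<Longrightarrow> form_mult d (smult c p) w = form_mult d p w"
  by (cases w) (simp_all add: form_mult_def order_smult)

lemma form_mult_add_le:
  assumes "u \<noteq> v" "p \<noteq> 0" "degree p \<le> d"
  shows "form_mult d p u + form_mult d p v \<le> d"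
proof -
  have order_le: "order a p \<le> degree p" for a
    using assms(2) by (rule order_degree)
  show ?thesis
  proof (cases u; cases v)
    fix a b assume "u = Fin a" "v = Fin b"
    with assms(1) have "replicate_mset (order a p) a + replicate_mset (order b p) b \<subseteq># proots p"
      using assms(2) by (auto simp: subseteq_mset_def)
    then have "order a p + order b p \<le> size (proots p)"
      using size_mset_mono by fastforce
    with \<open>u = Fin a\<close> \<open>v = Fin b\<close> assms(3) show ?thesis
      using size_proots_le[of p] by (simp add: form_mult_def)
  next
    fix a assume "u = Fin a" "v = Inf"
    then show ?thesis
      using order_le[of a] assms(3) by (simp add: form_mult_def)
  next
    fix b assume "u = Inf" "v = Fin b"
    then show ?thesis
      using order_le[of b] assms(3) by (simp add: form_mult_def)
  next
    assume "u = Inf" "v = Inf"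
    with assms(1) show ?thesis
      by simp
  qed
qed

lemma smult_if_form_mult_eq:
  assumes "p \<noteq> 0" "q \<noteq> 0" and "\<And>w. form_mult d p w = form_mult d q w"
  obtains c where "c \<noteq> 0" "p = smult c q"
proof
  have "\<And>x. order x p = order x q"
    using assms(3)[of "Fin x" for x] by (simp add: form_mult_def)
  then show "p = smult (lead_coeff p / lead_coeff q) q"
    by (rule complex_poly_eq_smult_if_order_eq[OF assms(1,2)])
qed (use assms in simp)

lemma root_form_2: "root_form {#u, v#} = lform (hcoord u) * lform (hcoord v)"
  by (simp add: root_form_def)

lemma root_form_3: "root_form {#a, b, c#} = lform (hcoord a) * lform (hcoord b) * lform (hcoord c)"
  by (simp add: root_form_def mult.assoc)

lemma degree_root_form_3: "degree (root_form {#a, b, c#}) \<le> 3"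
  using degree_root_form_le[of "{#a, b, c#}"] by (simp add: numeral_3_eq_3)

lemma lform_mult_lform:
  "lform u * lform v = [:fst u * fst v, - (fst u * snd v + snd u * fst v), snd u * snd v:]"
  by (simp add: lform_def algebra_simps)

lemma lform_mult_lform_mult_lform:
  "lform a * lform b * lform c =
    [:- (fst a * fst b * fst c), fst a * fst b * snd c + fst a * snd b * fst c + snd a * fst b * fst c,
      - (fst a * snd b * snd c + snd a * fst b * snd c + snd a * snd b * fst c), snd a * snd b * snd c:]"
  by (simp add: lform_def algebra_simps)

lemma discr_lform_mult_lform: "discr (lform u * lform v) = det2 u v ^ 2"
  by (simp add: lform_mult_lform discr_def det2_def power2_eq_square algebra_simps)

lemma discr_root_form_2: "discr (root_form {#u, v#}) \<noteq> 0 \<longleftrightarrow> u \<noteq> v"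
  by (simp add: root_form_2 discr_lform_mult_lform det2_hcoord_eq_0_iff)

section \<open>The cross-ratio condition\<close>

text \<open>The homogeneous form of (a - u)(b - v) + (b - u)(a - v): numerator plus denominator of the
  cross-ratio, which vanishes iff the cross-ratio is -1 or undefined.\<close>
definition cross_sum :: "hvec \<Rightarrow> hvec \<Rightarrow> hvec \<Rightarrow> hvec \<Rightarrow> complex" where
  "cross_sum a b u v = det2 a u * det2 b v + det2 b u * det2 a v"

definition cross_sum_prod :: "hvec \<Rightarrow> hvec \<Rightarrow> hvec \<Rightarrow> hvec \<Rightarrow> hvec \<Rightarrow> complex" where
  "cross_sum_prod a b c u v = cross_sum a b u v * cross_sum a c u v * cross_sum b c u v"

lemma cross_sum_commute: "cross_sum b a u v = cross_sum a b u v"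
  by (simp add: cross_sum_def algebra_simps)

lemma cross_sum_hscale [simp]:
  "cross_sum (hscale l1 a) (hscale l2 b) (hscale l3 u) (hscale l4 v) = l1 * l2 * l3 * l4 * cross_sum a b u v"
  by (simp add: cross_sum_def algebra_simps)

lemma sdiff_eq_det2: "sdiff a b = (if b = Inf then -1 else 1) * det2 (hcoord a) (hcoord b)"
  by (cases a; cases b) (simp_all add: sdiff_def det2_def)

lemma cross_ratio_ne_minus_one_iff:
  "(\<exists>c. cross_ratio a b u v = Some c \<and> c \<noteq> Fin (-1)) \<longleftrightarrow>
     cross_sum (hcoord a) (hcoord b) (hcoord u) (hcoord v) \<noteq> 0"
proof -
  define num den where "num = sdiff a u * sdiff b v" and "den = sdiff b u * sdiff a v"
  have "(\<exists>c. cross_ratio a b u v = Some c \<and> c \<noteq> Fin (-1)) \<longleftrightarrow> num + den \<noteq> 0"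
    unfolding cross_ratio_def Let_def num_def[symmetric] den_def[symmetric]
    by (cases "den = 0") (auto simp: hpt_def divide_eq_eq add_eq_0_iff)
  moreover have "num + den = (if u = Inf then -1 else 1) * (if v = Inf then -1 else 1) *
      cross_sum (hcoord a) (hcoord b) (hcoord u) (hcoord v)"
    by (simp add: num_def den_def sdiff_eq_det2 cross_sum_def algebra_simps)
  ultimately show ?thesis
    by auto
qed

lemma admissible_iff:
  "(z1, z2, z3, w1, w2) \<in> admissible \<longleftrightarrow>
     w1 \<noteq> w2 \<and> cross_sum_prod (hcoord z1) (hcoord z2) (hcoord z3) (hcoord w1) (hcoord w2) \<noteq> 0"
  by (auto simp: admissible_def numeral_3_eq_3 All_less_Suc cross_ratio_ne_minus_one_iff
      cross_sum_prod_def cross_sum_commute)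

section \<open>Openness\<close>

lemma hcoord_approx:
  assumes "\<epsilon> > 0"
  shows "\<exists>U. sph_open U \<and> p \<in> U \<and> (\<forall>q\<in>U. \<exists>l. l \<noteq> 0 \<and> dist (hscale l (hcoord q)) (hcoord p) < \<epsilon>)"
proof (cases p)
  case (Fin z)
  let ?U = "Fin ` ball z \<epsilon>"
  have "{w. Fin w \<in> ?U} = ball z \<epsilon>"
    by auto
  then have "sph_open ?U"
    by (auto simp: sph_open_def)
  moreover have "p \<in> ?U"
    using Fin assms by simp
  moreover have "\<exists>l. l \<noteq> 0 \<and> dist (hscale l (hcoord q)) (hcoord p) < \<epsilon>" if "q \<in> ?U" for q
  proof -
    from that obtain w where "q = Fin w" "dist z w < \<epsilon>"
      by auto
    with Fin show ?thesis
      by (intro exI[of _ 1]) (simp add: hscale_def dist_Pair_Pair dist_commute)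
  qed
  ultimately show ?thesis
    by blast
next
  case Inf
  let ?U = "insert Inf (Fin ` {w. norm w > 1 / \<epsilon>})"
  have "open {w::complex. norm w > 1 / \<epsilon>}"
    by (intro open_Collect_less continuous_intros)
  moreover have "{w. Fin w \<in> ?U} = {w. norm w > 1 / \<epsilon>}"
    by auto
  ultimately have "sph_open ?U"
    by (auto simp: sph_open_def)
  moreover have "\<exists>l. l \<noteq> 0 \<and> dist (hscale l (hcoord q)) (hcoord p) < \<epsilon>" if "q \<in> ?U" for q
  proof (cases q)
    case (Fin w)
    with that have "norm w > 1 / \<epsilon>"
      by auto
    with assms have "w \<noteq> 0"
      by (auto simp: field_simps)
    with assms \<open>norm w > 1 / \<epsilon>\<close> have "1 / norm w < \<epsilon>"
      by (simp add: field_simps)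
    with Fin Inf \<open>w \<noteq> 0\<close> show ?thesis
      by (intro exI[of _ "1 / w"]) (simp add: hscale_def dist_Pair_Pair dist_norm norm_divide)
  next
    case Inf
    with \<open>p = Inf\<close> assms show ?thesis
      by (intro exI[of _ 1]) (simp add: hscale_def)
  qed
  ultimately show ?thesis
    using Inf by blast
qed

lemma dist_Pair_le: "dist (a, b) (c, d) \<le> dist a c + dist b d"
  by (simp add: dist_Pair_Pair sqrt_sum_squares_le_sum)

lemma open5_nonvanishing:
  fixes H :: "hvec \<times> hvec \<times> hvec \<times> hvec \<times> hvec \<Rightarrow> complex"
  assumes "continuous_on UNIV H"
    and "\<And>l1 l2 l3 l4 l5 v1 v2 v3 v4 v5. l1 * l2 * l3 * l4 * l5 \<noteq> 0 \<Longrightarrow>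
      H (v1, v2, v3, v4, v5) = 0 \<Longrightarrow>
      H (hscale l1 v1, hscale l2 v2, hscale l3 v3, hscale l4 v4, hscale l5 v5) = 0"
  shows "open5 {(a, b, c, d, e). H (hcoord a, hcoord b, hcoord c, hcoord d, hcoord e) \<noteq> 0}"
  unfolding open5_def
proof clarify
  let ?S = "{(a, b, c, d, e). H (hcoord a, hcoord b, hcoord c, hcoord d, hcoord e) \<noteq> 0}"
  fix a b c d e
  let ?x = "(hcoord a, hcoord b, hcoord c, hcoord d, hcoord e)"
  assume "H ?x \<noteq> 0"
  moreover have "continuous (at ?x) H"
    using assms(1) continuous_on_eq_continuous_at open_UNIV by blast
  ultimately obtain r where "r > 0" and r: "\<And>y. dist ?x y < r \<Longrightarrow> H y \<noteq> 0"
    using continuous_at_avoid by blast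
  then have "\<forall>p. \<exists>U. sph_open U \<and> p \<in> U \<and>
      (\<forall>q\<in>U. \<exists>l. l \<noteq> 0 \<and> dist (hscale l (hcoord q)) (hcoord p) < r / 5)"
    using hcoord_approx[of "r / 5"] by simp
  then obtain U where U: "\<And>p. sph_open (U p)" "\<And>p. p \<in> U p"
    and "\<forall>p q. \<exists>l. q \<in> U p \<longrightarrow> l \<noteq> 0 \<and> dist (hscale l (hcoord q)) (hcoord p) < r / 5"
    by metis
  then obtain L where
    L: "\<And>p q. q \<in> U p \<Longrightarrow> L p q \<noteq> 0 \<and> dist (hscale (L p q) (hcoord q)) (hcoord p) < r / 5"
    by metis
  have "(q1, q2, q3, q4, q5) \<in> ?S"
    if q: "q1 \<in> U a" "q2 \<in> U b" "q3 \<in> U c" "q4 \<in> U d" "q5 \<in> U e" for q1 q2 q3 q4 q5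
  proof -
    let ?y = "(hscale (L a q1) (hcoord q1), hscale (L b q2) (hcoord q2), hscale (L c q3) (hcoord q3),
      hscale (L d q4) (hcoord q4), hscale (L e q5) (hcoord q5))"
    have "dist ?x ?y \<le> dist (hcoord a) (hscale (L a q1) (hcoord q1))
      + (dist (hcoord b) (hscale (L b q2) (hcoord q2))
      + (dist (hcoord c) (hscale (L c q3) (hcoord q3))
      + (dist (hcoord d) (hscale (L d q4) (hcoord q4))
      + dist (hcoord e) (hscale (L e q5) (hcoord q5)))))"
      by (intro order.trans[OF dist_Pair_le] add_left_mono) (simp_all add: dist_Pair_le)
    also have "\<dots> < r"
      using L[OF q(1)] L[OF q(2)] L[OF q(3)] L[OF q(4)] L[OF q(5)] by (simp add: dist_commute)
    finally have "H ?y \<noteq> 0"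
      by (rule r)
    moreover have "L a q1 * L b q2 * L c q3 * L d q4 * L e q5 \<noteq> 0"
      using L[OF q(1)] L[OF q(2)] L[OF q(3)] L[OF q(4)] L[OF q(5)] by simp
    ultimately show ?thesis
      using assms(2) by blast
  qed
  then show "\<exists>U1 U2 U3 U4 U5. sph_open U1 \<and> sph_open U2 \<and> sph_open U3 \<and> sph_open U4 \<and> sph_open U5 \<and>
      a \<in> U1 \<and> b \<in> U2 \<and> c \<in> U3 \<and> d \<in> U4 \<and> e \<in> U5 \<and> U1 \<times> U2 \<times> U3 \<times> U4 \<times> U5 \<subseteq> ?S"
    using U by blast
qed

lemma open5_admissible: "open5 admissible"
proof -
  define H :: "hvec \<times> hvec \<times> hvec \<times> hvec \<times> hvec \<Rightarrow> complex"
    where "H = (\<lambda>(v1, v2, v3, v4, v5). det2 v4 v5 * cross_sum_prod v1 v2 v3 v4 v5)"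
  have admissible_eq:
    "admissible = {(a, b, c, d, e). H (hcoord a, hcoord b, hcoord c, hcoord d, hcoord e) \<noteq> 0}"
    by (auto simp: H_def admissible_iff det2_hcoord_eq_0_iff)
  have "continuous_on UNIV H"
    unfolding H_def cross_sum_prod_def cross_sum_def det2_def case_prod_unfold
    by (intro continuous_intros)
  moreover have "H (hscale l1 v1, hscale l2 v2, hscale l3 v3, hscale l4 v4, hscale l5 v5) = 0"
    if "l1 * l2 * l3 * l4 * l5 \<noteq> 0" "H (v1, v2, v3, v4, v5) = 0" for l1 l2 l3 l4 l5 v1 v2 v3 v4 v5
    using that by (auto simp: H_def cross_sum_prod_def)
  ultimately show ?thesis
    unfolding admissible_eq by (rule open5_nonvanishing)
qed

section \<open>Totally marked maps\<close>

lemma crit_mult_eq_count: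
  assumes "deg2_rep P Q" "critical_points P Q = {w1, w2}" "w1 \<noteq> w2"
  shows "crit_mult P Q w = count {#w1, w2#} w"
proof -
  have W: "wronskian P Q \<noteq> 0" "degree (wronskian P Q) \<le> 2"
    using deg2_rep_wronskian_nonzero[OF assms(1)] assms(1)
    by (auto simp: deg2_rep_def intro: degree_wronskian_le)
  have "crit_mult P Q w1 + crit_mult P Q w2 \<le> 2"
    unfolding crit_mult_def by (rule form_mult_add_le[OF assms(3) W])
  moreover have "w1 \<in> critical_points P Q" "w2 \<in> critical_points P Q"
    "w \<notin> {w1, w2} \<Longrightarrow> w \<notin> critical_points P Q"
    using assms(2) by auto
  then have "crit_mult P Q w1 > 0" "crit_mult P Q w2 > 0"
    "w \<notin> {w1, w2} \<Longrightarrow> crit_mult P Q w = 0"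
    by (simp_all add: critical_points_def)
  ultimately show ?thesis
    using assms(3) by auto
qed

lemma fixed_form_nonzero:
  assumes "deg2_rep P Q"
  shows "pCons 0 Q - P \<noteq> 0"
proof
  assume "pCons 0 Q - P = 0"
  then have P: "P = [:0, 1:] * Q"
    by simp
  then have "Q dvd P"
    by (simp only: dvd_triv_right)
  with assms have "is_unit Q"
    by (auto simp: deg2_rep_def intro: coprime_common_divisor)
  then have "Q \<noteq> 0" "degree Q = 0"
    by (metis is_unit_iff_degree not_is_unit_0)+
  with P assms show False
    by (simp add: deg2_rep_def)
qed

lemma Rat2_tm_normal_form:
  assumes "(f, z1, z2, z3, w1, w2) \<in> Rat2_tm"
  obtains P Q c e where "deg2_rep P Q" "f = ratmap2 P Q" "w1 \<noteq> w2" "c \<noteq> 0" "e \<noteq> 0"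
    "pCons 0 Q - P = smult c (root_form {#z1, z2, z3#})"
    "wronskian P Q = smult e (root_form {#w1, w2#})"
proof -
  obtain P Q where PQ: "deg2_rep P Q" "f = ratmap2 P Q"
    and fix_mult: "\<And>w. count {#z1, z2, z3#} w = fix_mult P Q w"
    and crit: "critical_points P Q = {w1, w2}" and "w1 \<noteq> w2"
    using assms by (auto simp: Rat2_tm_def)
  have "\<And>w. form_mult 3 (pCons 0 Q - P) w = form_mult 3 (root_form {#z1, z2, z3#}) w"
    using fix_mult form_mult_root_form[of "{#z1, z2, z3#}"]
    by (simp add: fix_mult_def numeral_3_eq_3)
  then obtain c where "c \<noteq> 0" "pCons 0 Q - P = smult c (root_form {#z1, z2, z3#})"
    by (rule smult_if_form_mult_eq[OF fixed_form_nonzero[OF PQ(1)] root_form_nonzero])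
  moreover have "\<And>w. form_mult 2 (wronskian P Q) w = form_mult 2 (root_form {#w1, w2#}) w"
    using crit_mult_eq_count[OF PQ(1) crit \<open>w1 \<noteq> w2\<close>] form_mult_root_form[of "{#w1, w2#}"]
    by (simp add: crit_mult_def numeral_2_eq_2)
  then obtain e where "e \<noteq> 0" "wronskian P Q = smult e (root_form {#w1, w2#})"
    by (rule smult_if_form_mult_eq[OF deg2_rep_wronskian_nonzero[OF PQ(1)] root_form_nonzero])
  ultimately show ?thesis
    using that PQ \<open>w1 \<noteq> w2\<close> by blast
qed

lemma ratmap2_smult: "k \<noteq> 0 \<Longrightarrow> ratmap2 (smult k P) (smult k Q) = ratmap2 P Q"
  by (auto simp: fun_eq_iff ratmap2_def hpt_def split: csphere.split)

lemma wronskian_solve: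
  fixes a b c u v :: hvec
  defines "f \<equiv> lform a * lform b * lform c" and "t \<equiv> lform u * lform v"
  shows "wronskian (solve_num f t) (solve_den f t) = smult (2 * cross_sum_prod a b c u v) t"
  unfolding f_def t_def lform_mult_lform_mult_lform
  unfolding lform_mult_lform solve_den_def solve_num_def Let_def wronskian_quadratic
  by (simp add: discr_def cross_sum_prod_def cross_sum_def det2_def) algebra

definition marked_map ::
  "csphere \<Rightarrow> csphere \<Rightarrow> csphere \<Rightarrow> csphere \<Rightarrow> csphere \<Rightarrow> csphere \<Rightarrow> csphere" where
  "marked_map z1 z2 z3 w1 w2 =
    (let f = root_form {#z1, z2, z3#}; t = root_form {#w1, w2#}
     in ratmap2 (solve_num f t) (solve_den f t))"

lemma Rat2_tm_marked_map:
  assumes "(f, z1, z2, z3, w1, w2) \<in> Rat2_tm"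
  shows "marked_map z1 z2 z3 w1 w2 = f" and "(z1, z2, z3, w1, w2) \<in> admissible"
proof -
  let ?f = "root_form {#z1, z2, z3#}" and ?t = "root_form {#w1, w2#}"
  let ?N = "cross_sum_prod (hcoord z1) (hcoord z2) (hcoord z3) (hcoord w1) (hcoord w2)"
  obtain P Q c e where PQ: "deg2_rep P Q" "f = ratmap2 P Q" and "w1 \<noteq> w2" "c \<noteq> 0" "e \<noteq> 0"
    and fixed: "pCons 0 Q - P = smult c ?f" and wr: "wronskian P Q = smult e ?t"
    using Rat2_tm_normal_form[OF assms] by blast
  have deg: "degree P \<le> 2" "degree Q \<le> 2"
    using PQ(1) by (auto simp: deg2_rep_def)
  have "apolar ?t P" "apolar ?t Q"
    using apolar_wronskian[OF deg] wr \<open>e \<noteq> 0\<close> by simp_all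
  define k where "k = discr ?t / c"
  have "k \<noteq> 0"
    using \<open>w1 \<noteq> w2\<close> \<open>c \<noteq> 0\<close> by (simp add: k_def discr_root_form_2)
  have sol: "solve_num ?f ?t = smult k P" "solve_den ?f ?t = smult k Q"
    using apolar_pair_proportional[OF _ \<open>c \<noteq> 0\<close> \<open>apolar ?t P\<close> \<open>apolar ?t Q\<close> apolar_solve deg
        degree_solve_num degree_solve_den fixed fixed_form_solve[OF degree_root_form_3]]
      \<open>w1 \<noteq> w2\<close> by (simp_all add: k_def discr_root_form_2)
  with PQ(2) \<open>k \<noteq> 0\<close> show "marked_map z1 z2 z3 w1 w2 = f"
    by (simp add: marked_map_def ratmap2_smult)
  have "smult (2 * ?N) ?t = wronskian (solve_num ?f ?t) (solve_den ?f ?t)"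
    by (simp only: root_form_2 root_form_3 wronskian_solve)
  also have "\<dots> = smult (k^2 * e) ?t"
    by (simp only: sol wronskian_smult wr smult_smult)
  finally have "smult (2 * ?N) ?t = smult (k^2 * e) ?t" .
  then have "?N \<noteq> 0"
    using root_form_nonzero \<open>k \<noteq> 0\<close> \<open>e \<noteq> 0\<close> by auto
  with \<open>w1 \<noteq> w2\<close> show "(z1, z2, z3, w1, w2) \<in> admissible"
    by (simp add: admissible_iff)
qed

lemma marked_map_Rat2_tm:
  assumes "(z1, z2, z3, w1, w2) \<in> admissible"
  shows "(marked_map z1 z2 z3 w1 w2, z1, z2, z3, w1, w2) \<in> Rat2_tm"
proof -
  let ?f = "root_form {#z1, z2, z3#}" and ?t = "root_form {#w1, w2#}"
  let ?P = "solve_num ?f ?t" and ?Q = "solve_den ?f ?t"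
  let ?N = "cross_sum_prod (hcoord z1) (hcoord z2) (hcoord z3) (hcoord w1) (hcoord w2)"
  have "w1 \<noteq> w2" "?N \<noteq> 0"
    using assms by (auto simp: admissible_iff)
  have wr: "wronskian ?P ?Q = smult (2 * ?N) ?t"
    using wronskian_solve by (simp add: root_form_2 root_form_3)
  have "deg2_rep ?P ?Q"
    using \<open>w1 \<noteq> w2\<close> \<open>?N \<noteq> 0\<close>
    by (intro deg2_rep_if_discr_wronskian_nonzero) (simp_all add: wr discr_root_form_2)
  moreover have "count {#z1, z2, z3#} w = fix_mult ?P ?Q w" for w
    using form_mult_root_form[of "{#z1, z2, z3#}" w] \<open>w1 \<noteq> w2\<close>
    by (simp add: fix_mult_def fixed_form_solve[OF degree_root_form_3] form_mult_smult
        discr_root_form_2 numeral_3_eq_3)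
  moreover have "crit_mult ?P ?Q w = count {#w1, w2#} w" for w
    using form_mult_root_form[of "{#w1, w2#}" w] \<open>?N \<noteq> 0\<close>
    by (simp add: crit_mult_def wr form_mult_smult numeral_2_eq_2)
  then have "critical_points ?P ?Q = {w1, w2}"
    by (auto simp: critical_points_def)
  ultimately show ?thesis
    using \<open>w1 \<noteq> w2\<close>
    unfolding Rat2_tm_def Rat2_def marked_map_def Let_def mem_Collect_eq prod.case by blast
qed

theorem mainTheorem15:
  shows "bij_betw (\<lambda>(f, z1, z2, z3, w1, w2). (z1, z2, z3, w1, w2)) Rat2_tm admissible
         \<and> open5 admissible"
proof
  show "bij_betw (\<lambda>(f, z1, z2, z3, w1, w2). (z1, z2, z3, w1, w2)) Rat2_tm admissible"
    by (rule bij_betw_byWitness[where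
          f' = "\<lambda>(z1, z2, z3, w1, w2). (marked_map z1 z2 z3 w1 w2, z1, z2, z3, w1, w2)"])
      (auto simp: Rat2_tm_marked_map marked_map_Rat2_tm)
  show "open5 admissible"
    by (rule open5_admissible)
qed

end
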